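(* Let $\phi_k$, $k\in\{2,3,\dots\}$, be networks satisfying, for all $k\in\{2,3,\dots\}$, $\mathcal I(\phi_k)=\mathcal O(\mathbf P_2(\phi_2,\mathfrak I_{k-1}))$, $\phi_{k+1}=\phi_k\bullet\mathbf P_2(\phi_2,\mathfrak I_{k-1})$, and $$\phi_2=\left(\left(\begin{pmatrix}1&-1\\0&1\\0&-1\end{pmatrix},\begin{pmatrix}0\\0\\0\end{pmatrix}\right),\Bigl(\begin{pmatrix}1&1&-1\end{pmatrix},0\Bigr)\right)\in(\mathbb R^{3\times2}\times\mathbb R^3)\times(\mathbb R^{1\times3}\times\mathbb R).$$ Let $d\in\mathbb N$, $L\in\mathbb R$, let $D\subseteq\mathbb R^d$ be a set, let $f\colon D\to\mathbb R$ satisfy $|f(x)-f(y)|\le L\sum_{i=1}^d|x_i-y_i|$ for all $x,y\in D$, let $\mathcal M\subseteq D$ satisfy $|\mathcal M|\in\{2,3,\dots\}$, let $m\colon\{1,\dots,|\mathcal M|\}\to\mathcal M$ be bijective, let $W_1\in\mathbb R^{(2d)\times d}$ be the matrix whose rows $2i-1$ and $2i$ are $e_i^T$ and $-e_i^T$ ($i=1,\dots,d$, $e_i$ the standard unit vectors), let $W_2=(-L,-L,\dots,-L)\in\mathbb R^{1\times(2d)}$, for $z=(z_1,\dots,z_d)\in\mathcal M$ let $B_z=(-z_1,z_1,-z_2,z_2,\dots,-z_d,z_d)^T\in\mathbb R^{2d}$, let $\mathcal W_1\in\mathbb R^{(2d|\mathcal M|)\times d}$ be $W_1$ stacked vertically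 $|\mathcal M|$ times, $\mathcal B_1=(B_{m(1)};B_{m(2)};\dots;B_{m(|\mathcal M|)})\in\mathbb R^{2d|\mathcal M|}$, $\mathcal W_2\in\mathbb R^{|\mathcal M|\times(2d|\mathcal M|)}$ the block-diagonal matrix with $|\mathcal M|$ diagonal blocks equal to $W_2$, $\mathcal B_2=(f(m(1)),\dots,f(m(|\mathcal M|)))^T$, and let $\Phi=\phi_{|\mathcal M|}\bullet((\mathcal W_1,\mathcal B_1),(\mathcal W_2,\mathcal B_2))$. Then (i) $\mathcal D(\Phi)=(d,2d|\mathcal M|,2|\mathcal M|-1,2|\mathcal M|-3,\dots,3,1)\in\mathbb N^{|\mathcal M|+2}$; (ii) $\|\mathcal T(\Phi)\|_\infty\le\max\{1,L,\sup_{z\in\mathcal M}\|z\|_\infty,2\sup_{z\in\mathcal M}|f(z)|\}$; (iii) $\sup_{x\in D}|f(x)-(\mathcal R_{\mathfrak r}(\Phi))(x)|\le 2L\sup_{x\in D}\inf_{y\in\mathcal M}\sum_{i=1}^d|x_i-y_i|$.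
   Context: A network is a tuple $\Phi=((W_1,B_1),\dots,(W_L,B_L))$ with $L\in\mathbb N$, $l_0,\dots,l_L\in\mathbb N$, $W_k\in\mathbb R^{l_k\times l_{k-1}}$, $B_k\in\mathbb R^{l_k}$; its length is $L$, its dimensions $\mathcal D(\Phi)=(l_0,\dots,l_L)$, input dimension $\mathcal I(\Phi)=l_0$, output dimension $\mathcal O(\Phi)=l_L$. Its ReLU realization $\mathcal R_{\mathfrak r}(\Phi)\colon\mathbb R^{l_0}\to\mathbb R^{l_L}$ is $x_0\mapsto W_Lx_{L-1}+B_L$ where $x_k=\mathfrak R(W_kx_{k-1}+B_k)$ for $k=1,\dots,L-1$ and $\mathfrak R$ applies $y\mapsto\max\{y,0\}$ componentwise. Its vectorization $\mathcal T(\Phi)\in\mathbb R^{\sum_kl_k(l_{k-1}+1)}$ is the concatenation over $k=1,\dots,L$ of the entries of $W_k$ listed row by row followed by the entries of $B_k$; $\|\cdot\|_\infty$ is the maximum norm. Composition: if $\Phi_1=((W_1,B_1),\dots,(W_L,B_L))$, $\Phi_2=((\mathfrak W_1,\mathfrak B_1),\dots,(\mathfrak W_{\mathfrak L},\mathfrak B_{\mathfrak L}))$ with $\mathcal I(\Phi_1)=\mathcal O(\Phi_2)$, then $\Phi_1\bullet\Phi_2=((\mathfrak W_1,\mathfrak B_1),\dots,(\mathfrak W_{\mathfrak L-1},\mathfrak B_{\mathfrak L-1}),(W_1\mathfrak W_{\mathfrak L},W_1\mathfrak B_{\mathfrak L}+B_1),(W_2,B_2),\dots,(W_L,B_L))$.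 Parallelization: for networks $\Phi_1,\dots,\Phi_n$ of the same length $L$ with $\Phi_i=((W_{i,1},B_{i,1}),\dots,(W_{i,L},B_{i,L}))$, $\mathbf P_n(\Phi_1,\dots,\Phi_n)=((\mathrm{diag}(W_{1,k},\dots,W_{n,k}),(B_{1,k};\dots;B_{n,k})))_{k=1,\dots,L}$ (block-diagonal weights, stacked biases). Identity networks: $\mathfrak I_1=\bigl(((1,-1)^T,(0,0)^T),((1\ \ -1),0)\bigr)$ and $\mathfrak I_d=\mathbf P_d(\mathfrak I_1,\dots,\mathfrak I_1)$ for $d\in\mathbb N$. *)

theory Defs
  imports Complex_Main "HOL-Library.Extended_Real"
begin

text \<open>Matrices are lists of rows, vectors are lists. A network is a list of layers (W,B).\<close>

type_synonym vec = "real list"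
type_synonym mat = "real list list"
type_synonym net = "(mat \<times> vec) list"

definition ncols :: "mat \<Rightarrow> nat" where
  "ncols A = (if A = [] then 0 else length (hd A))"

definition mat_vec :: "mat \<Rightarrow> vec \<Rightarrow> vec" where
  "mat_vec W x = map (\<lambda>r. sum_list (map2 (*) r x)) W"

definition mat_mult :: "mat \<Rightarrow> mat \<Rightarrow> mat" where
  "mat_mult A B = map (\<lambda>r. map (\<lambda>c. sum_list (map2 (*) r c)) (transpose B)) A"

definition vadd :: "vec \<Rightarrow> vec \<Rightarrow> vec" where
  "vadd x y = map2 (+) x y"

definition relu :: "real \<Rightarrow> real" where
  "relu y = max y 0"

definition net_dims :: "net \<Rightarrow> nat list" where
  "net_dims \<Phi> = ncols (fst (hd \<Phi>)) # map (\<lambda>(W,B). length B) \<Phi>"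

definition net_in :: "net \<Rightarrow> nat" where
  "net_in \<Phi> = hd (net_dims \<Phi>)"

definition net_out :: "net \<Rightarrow> nat" where
  "net_out \<Phi> = last (net_dims \<Phi>)"

definition valid_net :: "net \<Rightarrow> bool" where
  "valid_net \<Phi> \<longleftrightarrow> \<Phi> \<noteq> [] \<and> (\<forall>l\<in>set (net_dims \<Phi>). l \<ge> 1) \<and>
     (\<forall>k<length \<Phi>. length (fst (\<Phi>!k)) = net_dims \<Phi> ! (k+1) \<and>
        (\<forall>r\<in>set (fst (\<Phi>!k)). length r = net_dims \<Phi> ! k))"

fun realize :: "net \<Rightarrow> vec \<Rightarrow> vec" where
  "realize [] x = x"
| "realize [(W,B)] x = vadd (mat_vec W x) B"
| "realize ((W,B) # \<Phi>) x = realize \<Phi> (map relu (vadd (mat_vec W x) B))"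

definition vectorize :: "net \<Rightarrow> vec" where
  "vectorize \<Phi> = concat (map (\<lambda>(W,B). concat W @ B) \<Phi>)"

definition maxnorm :: "vec \<Rightarrow> real" where
  "maxnorm v = Max (insert 0 (abs ` set v))"

definition ncomp :: "net \<Rightarrow> net \<Rightarrow> net" where
  "ncomp \<Phi>1 \<Phi>2 = butlast \<Phi>2 @
     [(mat_mult (fst (hd \<Phi>1)) (fst (last \<Phi>2)),
       vadd (mat_vec (fst (hd \<Phi>1)) (snd (last \<Phi>2))) (snd (hd \<Phi>1)))] @ tl \<Phi>1"

fun blockdiag :: "mat list \<Rightarrow> mat" where
  "blockdiag [] = []"
| "blockdiag (A # As) =
     map (\<lambda>r. r @ replicate (sum_list (map ncols As)) 0) A @
     map (\<lambda>r. replicate (ncols A) 0 @ r) (blockdiag As)"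

definition par :: "net list \<Rightarrow> net" where
  "par \<Phi>s = map (\<lambda>k. (blockdiag (map (\<lambda>\<Phi>. fst (\<Phi>!k)) \<Phi>s), concat (map (\<lambda>\<Phi>. snd (\<Phi>!k)) \<Phi>s)))
              [0..<length (hd \<Phi>s)]"

definition id1 :: net where
  "id1 = [([[1],[-1]], [0,0]), ([[1,-1]], [0])]"

definition idnet :: "nat \<Rightarrow> net" where
  "idnet d = par (replicate d id1)"

definition phi2 :: net where
  "phi2 = [([[1,-1],[0,1],[0,-1]], [0,0,0]), ([[1,1,-1]], [0])]"

text \<open>the l^1 distance \<Sum>_{i=1}^d |x_i - y_i| (coordinates indexed from 0)\<close>
definition dist1 :: "nat \<Rightarrow> vec \<Rightarrow> vec \<Rightarrow> real" where
  "dist1 d x y = (\<Sum>i<d. \<bar>x!i - y!i\<bar>)"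

definition unitv :: "nat \<Rightarrow> nat \<Rightarrow> vec" where
  "unitv d i = map (\<lambda>j. if j = i then 1 else 0) [0..<d]"

definition W1 :: "nat \<Rightarrow> mat" where
  "W1 d = concat (map (\<lambda>i. [unitv d i, map uminus (unitv d i)]) [0..<d])"

definition W2 :: "nat \<Rightarrow> real \<Rightarrow> mat" where
  "W2 d L = [replicate (2*d) (-L)]"

definition Bz :: "nat \<Rightarrow> vec \<Rightarrow> vec" where
  "Bz d z = concat (map (\<lambda>i. [-(z!i), z!i]) [0..<d])"

end

(* The network Phi computes x |-> max_{z in M} (f z - L ||x - z||_1), the McShane extension of
   f restricted to M.  Its first two layers compute the |M| cones f z - L ||x - z||_1, using
   |t| = relu t + relu (-t).  The network phi_n computes the maximum of n numbers by induction on n: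
   P_2(phi_2, I_(n-1)) replaces the first two inputs a, b by max a b = relu (a - b) + relu b - relu (-b)
   and passes the others on.  The maximum lies below f x by the Lipschitz bound and above
   f z - L ||x - z||_1 for every z in M, which gives the error 2 L ||x - z||_1.  Dimensions and weights
   are read off an explicit description of the layers: in the composition, the first layer of phi_n
   merges with the block-diagonal output layer of the cone network into a single layer with entries
   in {0, L, -L} and biases f z_1 - f z_2 or +-f z. *)

theory Submission
  imports Defs
begin

definition mat_of :: "nat \<Rightarrow> nat \<Rightarrow> (nat \<Rightarrow> nat \<Rightarrow> real) \<Rightarrow> mat" where
  "mat_of a b F = map (\<lambda>i. map (F i) [0..<b]) [0..<a]"

lemma length_mat_of [simp]: "length (mat_of a b F) = a"
  by (simp add: mat_of_def)

lemma nth_mat_of [simp]: "i < a \<Longrightarrow> mat_of a b F ! i = map (F i) [0..<b]"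
  by (simp add: mat_of_def)

lemma ncols_mat_of [simp]: "0 < a \<Longrightarrow> ncols (mat_of a b F) = b"
  by (simp add: mat_of_def ncols_def hd_map)

lemma mat_of_cong:
  "a = a' \<Longrightarrow> b = b' \<Longrightarrow> (\<And>i j. i < a \<Longrightarrow> j < b \<Longrightarrow> F i j = G i j) \<Longrightarrow> mat_of a b F = mat_of a' b' G"
  unfolding mat_of_def by (auto intro!: map_cong)

lemma mat_of_eqI:
  assumes "length X = a" "\<And>i. i < a \<Longrightarrow> length (X ! i) = b"
    and "\<And>i j. i < a \<Longrightarrow> j < b \<Longrightarrow> X ! i ! j = F i j"
  shows "X = mat_of a b F"
  by (rule nth_equalityI) (auto simp: assms intro!: nth_equalityI)

lemma entry_mat_of: "r \<in> set (mat_of a b F) \<Longrightarrow> e \<in> set r \<Longrightarrow> \<exists>i<a. \<exists>j<b. e = F i j"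
  unfolding mat_of_def by auto blast

lemma transpose_mat_of: "0 < a \<Longrightarrow> transpose (mat_of a b F) = mat_of b a (\<lambda>i j. F j i)"
  by (subst transpose_rectangle[where n = b]) (auto simp: mat_of_def)

lemma sum_list_map2_times_upt:
  "length x = b \<Longrightarrow> sum_list (map2 (*) (map g [0..<b]) x) = (\<Sum>k<b. g k * x ! k)"
proof -
  assume "length x = b"
  then have "zip (map g [0..<b]) x = map (\<lambda>k. (g k, x ! k)) [0..<b]"
    by (intro nth_equalityI) auto
  then show ?thesis
    by (simp add: sum_set_upt_conv_sum_list_nat[symmetric] atLeast0LessThan o_def)
qed

lemma mat_vec_mat_of:
  "length x = b \<Longrightarrow> mat_vec (mat_of a b F) x = map (\<lambda>i. \<Sum>k<b. F i k * x ! k) [0..<a]"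
  by (simp add: mat_vec_def mat_of_def sum_list_map2_times_upt)

lemma mat_mult_mat_of:
  "0 < b \<Longrightarrow> mat_mult (mat_of a b F) (mat_of b c G) = mat_of a c (\<lambda>i j. \<Sum>k<b. F i k * G k j)"
  by (simp add: mat_mult_def transpose_mat_of) (simp add: mat_of_def sum_list_map2_times_upt)

lemma vadd_map_upt: "length B = a \<Longrightarrow> vadd (map g [0..<a]) B = map (\<lambda>i. g i + B ! i) [0..<a]"
  by (intro nth_equalityI) (auto simp: vadd_def)

lemma mat_vec_concat: "mat_vec (concat Ws) x = concat (map (\<lambda>W. mat_vec W x) Ws)"
  by (simp add: mat_vec_def map_concat)

lemma vadd_concat:
  "list_all2 (\<lambda>u v. length u = length v) us vs \<Longrightarrow> vadd (concat us) (concat vs) = concat (map2 vadd us vs)"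
  by (induction rule: list_all2_induct) (simp_all add: vadd_def)

lemma sum_list_map2_times_replicate_zero: "sum_list (map2 (*) (replicate n 0) (v :: real list)) = 0"
  by (simp add: zip_replicate1 o_def)

lemma mat_vec_blockdiag:
  "list_all2 (\<lambda>W v. length v = ncols W \<and> (\<forall>r\<in>set W. length r = length v)) Ws vs \<Longrightarrow>
    mat_vec (blockdiag Ws) (concat vs) = concat (map2 mat_vec Ws vs)"
proof (induction rule: list_all2_induct)
  case (Cons W Ws v vs)
  from \<open>list_all2 _ Ws vs\<close> have "sum_list (map ncols Ws) = length (concat vs)"
    by (induction rule: list_all2_induct) simp_all
  with Cons show ?case
    by (simp add: mat_vec_def o_def sum_list_map2_times_replicate_zero)
qed (simp add: mat_vec_def)

lemma blockdiag_Cons_mat_of: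
  assumes "0 < a" "0 < c" "blockdiag Xs = mat_of c e G" "sum_list (map ncols Xs) = e"
  shows "blockdiag (mat_of a b F # Xs) = mat_of (a + c) (b + e)
    (\<lambda>i j. if i < a then if j < b then F i j else 0 else if b \<le> j then G (i - a) (j - b) else 0)"
  by (rule mat_of_eqI) (use assms in \<open>auto simp: nth_append\<close>)

lemma blockdiag_pair_mat_of:
  assumes "0 < a" "0 < c"
  shows "blockdiag [mat_of a b F, mat_of c e G] = mat_of (a + c) (b + e)
    (\<lambda>i j. if i < a then if j < b then F i j else 0 else if b \<le> j then G (i - a) (j - b) else 0)"
  using assms by (intro blockdiag_Cons_mat_of) auto

lemma blockdiag_replicate_mat_of:
  assumes "0 < a" "0 < b"
  shows "blockdiag (replicate (Suc n) (mat_of a b F)) = mat_of (Suc n * a) (Suc n * b)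
    (\<lambda>i j. if i div a = j div b then F (i mod a) (j mod b) else 0)"
proof (induction n)
  case 0
  show ?case using assms by (auto intro!: mat_of_cong)
next
  case (Suc n)
  have "blockdiag (replicate (Suc (Suc n)) (mat_of a b F))
      = blockdiag (mat_of a b F # replicate (Suc n) (mat_of a b F))"
    by simp
  also have "\<dots> = mat_of (Suc (Suc n) * a) (Suc (Suc n) * b)
    (\<lambda>i j. if i div a = j div b then F (i mod a) (j mod b) else 0)"
    using assms by (subst blockdiag_Cons_mat_of[OF _ _ Suc])
      (auto simp: sum_list_replicate div_if mod_if intro!: mat_of_cong)
  finally show ?case .
qed

lemma realize_Cons: "realize ((W, B) # \<Phi>) x =
  (if \<Phi> = [] then vadd (mat_vec W x) B else realize \<Phi> (map relu (vadd (mat_vec W x) B)))"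
  by (cases \<Phi>) auto

lemma realize_ncomp_two_layers:
  assumes "0 < b" "length B = a" "length C = b" "length (vadd (mat_vec U x) A) = c"
  shows "realize (ncomp ((mat_of a b F, B) # \<Phi>) [(U, A), (mat_of b c G, C)]) x
    = realize ((mat_of a b F, B) # \<Phi>) (realize [(U, A), (mat_of b c G, C)] x)"
proof -
  have affine: "vadd (mat_vec (mat_mult (mat_of a b F) (mat_of b c G)) h) (vadd (mat_vec (mat_of a b F) C) B)
      = vadd (mat_vec (mat_of a b F) (vadd (mat_vec (mat_of b c G) h) C)) B" if "length h = c" for h
  proof -
    have "(\<Sum>j<c. (\<Sum>k<b. F i k * G k j) * h ! j) + ((\<Sum>k<b. F i k * C ! k) + B ! i)
        = (\<Sum>k<b. F i k * ((\<Sum>j<c. G k j * h ! j) + C ! k)) + B ! i" for i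
      by (simp add: sum_distrib_left sum_distrib_right distrib_left sum.distrib mult.assoc
          sum.swap[of _ "{..<c}"])
    then show ?thesis
      using assms that by (simp add: mat_mult_mat_of mat_vec_mat_of vadd_map_upt)
  qed
  show ?thesis
    using assms by (simp add: ncomp_def realize_Cons[of U] realize_Cons[of "mat_mult _ _"]
        realize_Cons[of "mat_of a b F"] affine)
qed

(* Entries of the two layers of P_2(phi_2, I_(p+1)): the first maps x to
   (x_0 - x_1, x_1, -x_1, x_2, -x_2, ...), the second maps h to
   (h_0 + h_1 - h_2, h_3 - h_4, h_5 - h_6, ...). *)
definition max_layer1 :: "nat \<Rightarrow> nat \<Rightarrow> real" where
  "max_layer1 i j = (if i = 0 then (if j = 0 then 1 else if j = 1 then -1 else 0)
     else if j = (i + 1) div 2 then (if odd i then 1 else -1) else 0)"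

definition max_layer2 :: "nat \<Rightarrow> nat \<Rightarrow> real" where
  "max_layer2 i j = (if i = 0 then (if j = 0 \<or> j = 1 then 1 else if j = 2 then -1 else 0)
     else if j = 2 * i + 1 then 1 else if j = 2 * i + 2 then -1 else 0)"

lemma phi2_eq_mat_of:
  "phi2 = [(mat_of 3 2 max_layer1, replicate 3 0), (mat_of 1 3 max_layer2, replicate 1 0)]"
  by (simp add: phi2_def mat_of_def upt_rec max_layer1_def max_layer2_def numeral_3_eq_3)

lemma idnet_eq_mat_of: "idnet (Suc p) =
  [(mat_of (Suc p * 2) (Suc p * 1) (\<lambda>i j. if i div 2 = j div 1 then if i mod 2 = 0 then 1 else -1 else 0),
    replicate (Suc p * 2) 0),
   (mat_of (Suc p * 1) (Suc p * 2) (\<lambda>i j. if i div 1 = j div 2 then if j mod 2 = 0 then 1 else -1 else 0),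
    replicate (Suc p * 1) 0)]"
proof -
  have id1: "id1 = [(mat_of 2 1 (\<lambda>i j. if i = 0 then 1 else -1), replicate 2 0),
                    (mat_of 1 2 (\<lambda>i j. if j = 0 then 1 else -1), replicate 1 0)]"
    by (simp add: id1_def mat_of_def upt_rec numeral_2_eq_2)
  have "concat (replicate n (replicate c (0::real))) = replicate (n * c) 0" for n c
    by (induction n) (auto simp: replicate_add)
  then show ?thesis
    unfolding idnet_def par_def
    by (simp add: id1 upt_rec blockdiag_replicate_mat_of del: replicate_Suc blockdiag.simps)
qed

(* The entries that blockdiag_pair_mat_of produces for the layers of P_2(phi_2, I_(p+1)). *)
lemma max_layer1_blockdiag_entry:
  "(if i < 3 then if j < 2 then max_layer1 i j else 0
    else if 2 \<le> j then if (i - 3) div 2 = j - 2 then if (i - 3) mod 2 = 0 then 1 else - 1 else 0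
    else 0) = max_layer1 i j"
proof (cases "i < 3")
  case True
  then have "i = 0 \<or> i = 1 \<or> i = 2" by auto
  then show ?thesis unfolding max_layer1_def by (elim disjE) (simp_all add: not_less)
next
  case False
  then obtain t where t: "i = t + 3" by (metis add.commute le_iff_add not_less)
  have "(i + 1) div 2 = t div 2 + 2" and "odd i \<longleftrightarrow> (i - 3) mod 2 = 0"
    using t by presburger+
  then show ?thesis using False t unfolding max_layer1_def by auto
qed

lemma max_layer2_blockdiag_entry:
  "(if i = 0 then if j < 3 then max_layer2 i j else 0
    else if 3 \<le> j then if i - Suc 0 = (j - 3) div 2 then if (j - 3) mod 2 = 0 then 1 else - 1 else 0
    else 0) = max_layer2 i j"
proof (cases "i = 0")
  case True
  then show ?thesis unfolding max_layer2_def by auto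
next
  case False
  show ?thesis
  proof (cases "j < 3")
    case True
    then show ?thesis using False unfolding max_layer2_def by auto
  next
    case False2: False
    then obtain s where s: "j = s + 3" by (metis add.commute le_iff_add not_less)
    have "s div 2 = i - 1 \<and> even s \<longleftrightarrow> s + 3 = 2 * i + 1" using False by presburger
    moreover have "s div 2 = i - 1 \<and> odd s \<longleftrightarrow> s + 3 = 2 * i + 2" using False by presburger
    ultimately show ?thesis using False False2 unfolding max_layer2_def s by auto
  qed
qed

lemma par_phi2_idnet: "par [phi2, idnet (Suc p)] =
  [(mat_of (2 * p + 5) (p + 3) max_layer1, replicate (2 * p + 5) 0),
   (mat_of (p + 2) (2 * p + 5) max_layer2, replicate (p + 2) 0)]"
  unfolding par_def phi2_eq_mat_of idnet_eq_mat_of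
  by (simp add: upt_rec blockdiag_pair_mat_of replicate_add[symmetric] del: blockdiag.simps replicate_Suc)
    (auto simp: max_layer1_blockdiag_entry max_layer2_blockdiag_entry intro!: mat_of_cong)

lemma sum_max_layer1:
  assumes "2 \<le> n" "i < 2 * n - 1"
  shows "(\<Sum>k<n. max_layer1 i k * g k) =
    (if i = 0 then g 0 - g 1 else if odd i then g ((i + 1) div 2) else - g ((i + 1) div 2))"
proof (cases "i = 0")
  case True
  have "(\<Sum>k<n. max_layer1 i k * g k) = (\<Sum>k<n. (if k = 0 then g 0 else 0) + (if k = 1 then - g 1 else 0))"
    using True by (intro sum.cong) (auto simp: max_layer1_def)
  then show ?thesis using True assms by (simp add: sum.distrib)
next
  case False
  have "(\<Sum>k<n. max_layer1 i k * g k) =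
      (\<Sum>k<n. if k = (i + 1) div 2 then if odd i then g k else - g k else 0)"
    using False by (intro sum.cong) (auto simp: max_layer1_def)
  moreover have "(i + 1) div 2 < n" using assms by linarith
  ultimately show ?thesis using False by simp
qed

lemma sum_max_layer2:
  assumes "i < n"
  shows "(\<Sum>j<2 * n + 1. max_layer2 i j * g j) =
    (if i = 0 then g 0 + g 1 - g 2 else g (2 * i + 1) - g (2 * i + 2))"
proof (cases "i = 0")
  case True
  have "(\<Sum>j<2 * n + 1. max_layer2 i j * g j) =
      (\<Sum>j<2 * n + 1. (if j = 0 then g 0 else 0) + (if j = 1 then g 1 else 0) + (if j = 2 then - g 2 else 0))"
    using True by (intro sum.cong) (auto simp: max_layer2_def)
  then show ?thesis using True assms by (simp add: sum.distrib)
next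
  case False
  have "(\<Sum>j<2 * n + 1. max_layer2 i j * g j) =
      (\<Sum>j<2 * n + 1. (if j = 2 * i + 1 then g (2 * i + 1) else 0) +
        (if j = 2 * i + 2 then - g (2 * i + 2) else 0))"
    using False by (intro sum.cong) (auto simp: max_layer2_def)
  then show ?thesis using False assms by (simp add: sum.distrib)
qed

lemma relu_minus_relu_uminus: "relu a - relu (- a) = a"
  by (auto simp: relu_def)

lemma realize_par_phi2_idnet:
  assumes "length x = p + 3"
  shows "realize (par [phi2, idnet (Suc p)]) x = max (x ! 0) (x ! 1) # drop 2 x"
proof -
  define h where
    "h = map relu (vadd (mat_vec (mat_of (2 * p + 5) (p + 3) max_layer1) x) (replicate (2 * p + 5) 0))"
  have h: "h = map (\<lambda>j. relu (\<Sum>k<p + 3. max_layer1 j k * x ! k)) [0..<2 * p + 5]"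
    unfolding h_def using assms by (simp add: mat_vec_mat_of vadd_map_upt del: upt_Suc)
  have h_nth: "h ! j = relu (if j = 0 then x ! 0 - x ! 1
      else if odd j then x ! ((j + 1) div 2) else - x ! ((j + 1) div 2))"
    if "j < 2 * p + 5" for j
    using that unfolding h by (simp add: sum_max_layer1[where n = "p + 3"] del: upt_Suc)
  have "realize (par [phi2, idnet (Suc p)]) x
      = vadd (mat_vec (mat_of (p + 2) (2 * (p + 2) + 1) max_layer2) h) (replicate (p + 2) 0)"
    unfolding par_phi2_idnet h_def by (simp add: numeral_eq_Suc)
  also have "\<dots> = map (\<lambda>i. \<Sum>j<2 * (p + 2) + 1. max_layer2 i j * h ! j) [0..<p + 2]"
    by (simp add: mat_vec_mat_of vadd_map_upt h del: upt_Suc replicate_Suc)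
  also have "\<dots> = max (x ! 0) (x ! 1) # drop 2 x" (is "?y = _")
  proof (rule nth_equalityI)
    fix i assume "i < length ?y"
    then have i: "i < p + 2" by simp
    then have "?y ! i = (\<Sum>j<2 * (p + 2) + 1. max_layer2 i j * h ! j)"
      by (simp del: upt_Suc)
    also have "\<dots> = (if i = 0 then h ! 0 + h ! 1 - h ! 2 else h ! (2 * i + 1) - h ! (2 * i + 2))"
      by (rule sum_max_layer2[OF i])
    also have "\<dots> = (max (x ! 0) (x ! 1) # drop 2 x) ! i"
    proof (cases i)
      case 0
      then show ?thesis by (simp add: h_nth relu_def)
    next
      case (Suc k)
      have "(2 * i + 1 + 1) div 2 = i + 1" "(2 * i + 2 + 1) div 2 = i + 1" by simp_all
      then show ?thesis
        using i assms Suc by (simp add: h_nth relu_minus_relu_uminus del: upt_Suc)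
    qed
    finally show "?y ! i = (max (x ! 0) (x ! 1) # drop 2 x) ! i" .
  qed (use assms in simp)
  finally show ?thesis .
qed

lemma abs_sum_mult_le_single_support:
  fixes F G :: "nat \<Rightarrow> real"
  assumes "\<And>l. l < b \<Longrightarrow> \<bar>F l\<bar> \<le> 1" "\<And>l. l < b \<Longrightarrow> \<bar>G l\<bar> \<le> c" "0 \<le> c"
    and "\<And>l l'. l < b \<Longrightarrow> l' < b \<Longrightarrow> G l \<noteq> 0 \<Longrightarrow> G l' \<noteq> 0 \<Longrightarrow> l = l'"
  shows "\<bar>\<Sum>l<b. F l * G l\<bar> \<le> c"
proof (cases "\<exists>l<b. G l \<noteq> 0")
  case True
  then obtain l0 where l0: "l0 < b" "G l0 \<noteq> 0" by auto
  have "(\<Sum>l<b. F l * G l) = (\<Sum>l<b. if l = l0 then F l0 * G l0 else 0)"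
    using assms(4)[OF l0(1) _ l0(2)] by (intro sum.cong) auto
  then have "\<bar>\<Sum>l<b. F l * G l\<bar> = \<bar>F l0\<bar> * \<bar>G l0\<bar>"
    using l0 by (simp add: abs_mult)
  also have "\<dots> \<le> 1 * c"
    using assms(1,2)[OF l0(1)] by (intro mult_mono) auto
  finally show ?thesis by simp
next
  case False
  then show ?thesis using assms(3) by (simp add: sum.neutral)
qed

lemma Max_set_max_Cons: "Max (set (max a b # xs)) = Max (set (a # b # xs :: real list))"
  by (cases "xs = []") (simp_all add: max.assoc)

(* Besides computing the maximum, phi_n is described as far as composing with it requires: its first
   layer is that of P_2(phi_2, I_(n-1)) and gets merged with the preceding layer, the other layers
   have widths 2(n-j)-1 and entries in [-1,1]. *)
definition max_net :: "nat \<Rightarrow> net \<Rightarrow> bool" where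
  "max_net n \<Phi> \<longleftrightarrow>
    (\<exists>R. \<Phi> = (mat_of (2 * n - 1) n max_layer1, replicate (2 * n - 1) 0) # R \<and>
         map (\<lambda>(W, B). length B) R = map (\<lambda>j. 2 * (n - j) - 1) [1..<n] \<and>
         (\<forall>e\<in>set (vectorize R). \<bar>e\<bar> \<le> 1)) \<and>
    (\<forall>x. length x = n \<longrightarrow> realize \<Phi> x = [Max (set x)])"

lemma max_net_phi2: "max_net 2 phi2"
proof -
  have "realize phi2 x = [Max (set x)]" if "length x = 2" for x
  proof -
    from that obtain a b where "x = [a, b]"
      by (metis One_nat_def Suc_1 length_0_conv length_Suc_conv)
    then show ?thesis by (simp add: phi2_def mat_vec_def vadd_def relu_def max_def)
  qed
  moreover have "\<forall>e\<in>set (vectorize [(mat_of 1 3 max_layer2, replicate 1 0)]). \<bar>e\<bar> \<le> 1"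
    by (auto simp: vectorize_def mat_of_def max_layer2_def)
  ultimately show ?thesis
    unfolding max_net_def
    by (intro conjI exI[of _ "[(mat_of 1 3 max_layer2, replicate 1 0)]"]) (simp_all add: phi2_eq_mat_of upt_rec)
qed

lemma max_layer2_column_single_support:
  "max_layer2 l j \<noteq> 0 \<Longrightarrow> max_layer2 l' j \<noteq> 0 \<Longrightarrow> l = l'"
  unfolding max_layer2_def by (auto split: if_splits)

lemma abs_sum_max_layer1_max_layer2_le: "\<bar>\<Sum>l<n. max_layer1 i l * max_layer2 l j\<bar> \<le> 1"
  by (rule abs_sum_mult_le_single_support)
    (auto simp: max_layer1_def max_layer2_def intro: max_layer2_column_single_support)

lemma realize_ncomp_par_phi2_idnet:
  assumes \<Phi>: "\<Phi> = (mat_of (2 * (p + 2) - 1) (p + 2) max_layer1, replicate (2 * (p + 2) - 1) 0) # R"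
    and max: "\<And>y. length y = p + 2 \<Longrightarrow> realize \<Phi> y = [Max (set y)]"
    and x: "length x = p + 3"
  shows "realize (ncomp \<Phi> (par [phi2, idnet (Suc p)])) x = [Max (set x)]"
proof -
  have x_eq: "x = x ! 0 # x ! 1 # drop 2 x"
    using x by (cases x; cases "tl x") auto
  have "realize (ncomp \<Phi> (par [phi2, idnet (Suc p)])) x
      = realize \<Phi> (realize (par [phi2, idnet (Suc p)]) x)"
    unfolding \<Phi> par_phi2_idnet by (rule realize_ncomp_two_layers) (simp_all add: vadd_def mat_vec_def)
  also have "\<dots> = [Max (set x)]"
    using x by (subst x_eq) (simp add: realize_par_phi2_idnet max Max_set_max_Cons)
  finally show ?thesis .
qed

lemma max_net_ncomp:
  assumes "max_net (p + 2) \<Phi>"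
  shows "max_net (p + 3) (ncomp \<Phi> (par [phi2, idnet (Suc p)]))"
proof -
  obtain R where \<Phi>: "\<Phi> = (mat_of (2 * (p + 2) - 1) (p + 2) max_layer1, replicate (2 * (p + 2) - 1) 0) # R"
    and dims: "map (\<lambda>(W, B). length B) R = map (\<lambda>j. 2 * (p + 2 - j) - 1) [1..<p + 2]"
    and entries: "\<forall>e\<in>set (vectorize R). \<bar>e\<bar> \<le> 1"
    and max: "\<And>x. length x = p + 2 \<Longrightarrow> realize \<Phi> x = [Max (set x)]"
    using assms unfolding max_net_def by blast
  define W where
    "W = mat_of (2 * (p + 2) - 1) (2 * p + 5) (\<lambda>i j. \<Sum>l<p + 2. max_layer1 i l * max_layer2 l j)"
  have comp: "ncomp \<Phi> (par [phi2, idnet (Suc p)]) =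
      (mat_of (2 * (p + 3) - 1) (p + 3) max_layer1, replicate (2 * (p + 3) - 1) 0) #
      (W, replicate (2 * (p + 2) - 1) 0) # R"
  proof -
    have "2 * (p + 3) - 1 = 2 * p + 5" by simp
    then show ?thesis
      unfolding \<Phi> par_phi2_idnet W_def
      by (simp add: ncomp_def mat_mult_mat_of mat_vec_mat_of vadd_def zip_replicate
          map_replicate_const add.commute del: upt_Suc replicate_Suc)
  qed
  have "\<bar>e\<bar> \<le> 1" if "e \<in> set (concat W)" for e
  proof -
    from that obtain i j where "e = (\<Sum>l<p + 2. max_layer1 i l * max_layer2 l j)"
      unfolding W_def by (auto dest: entry_mat_of)
    then show ?thesis using abs_sum_max_layer1_max_layer2_le[where n = "p + 2"] by (simp only:)
  qed
  moreover have "vectorize ((W, B) # R) = concat W @ B @ vectorize R" for B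
    by (simp add: vectorize_def)
  ultimately have "\<forall>e\<in>set (vectorize ((W, replicate (2 * (p + 2) - 1) 0) # R)). \<bar>e\<bar> \<le> 1"
    using entries by auto
  moreover have "map (\<lambda>(W, B). length B) ((W, replicate (2 * (p + 2) - 1) 0) # R) =
      map (\<lambda>j. 2 * (p + 3 - j) - 1) [1..<p + 3]"
  proof -
    have "[1..<p + 3] = 1 # map Suc [1..<p + 2]"
      by (subst map_Suc_upt) (simp add: upt_conv_Cons numeral_eq_Suc del: upt_Suc)
    then show ?thesis using dims by (simp del: upt_Suc)
  qed
  moreover have "realize (ncomp \<Phi> (par [phi2, idnet (Suc p)])) x = [Max (set x)]" if "length x = p + 3" for x
    using \<Phi> max that by (rule realize_ncomp_par_phi2_idnet)
  ultimately show ?thesis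
    unfolding max_net_def comp by blast
qed

lemma max_net_phi:
  assumes step: "\<forall>k\<ge>2. phi (Suc k) = ncomp (phi k) (par [phi 2, idnet (k - 1)])"
    and phi_2: "phi 2 = phi2" and n: "2 \<le> n"
  shows "max_net n (phi n)"
proof -
  obtain p where "n = p + 2" using n by (metis add.commute le_iff_add)
  moreover have "max_net (p + 2) (phi (p + 2))"
  proof (induction p)
    case 0
    show ?case unfolding add_0 phi_2 by (rule max_net_phi2)
  next
    case (Suc p)
    have "phi (Suc p + 2) = ncomp (phi (p + 2)) (par [phi2, idnet (Suc p)])"
      using step[rule_format, of "p + 2"] phi_2 by simp
    then show ?case using max_net_ncomp[OF Suc] by (simp add: numeral_3_eq_3)
  qed
  ultimately show ?thesis by simp
qed

(* The two layers of Phi preceding phi_|M|, for the sample points zs = [m 1, ..., m |M|] and values g. *)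
definition cone_net :: "nat \<Rightarrow> real \<Rightarrow> (vec \<Rightarrow> real) \<Rightarrow> vec list \<Rightarrow> net" where
  "cone_net d L g zs =
    [(concat (replicate (length zs) (W1 d)), concat (map (Bz d) zs)),
     (blockdiag (replicate (length zs) (W2 d L)), map g zs)]"

lemma length_Bz [simp]: "length (Bz d z) = 2 * d"
  by (simp add: Bz_def length_concat sum_list_triv o_def)

lemma length_W1 [simp]: "length (W1 d) = 2 * d"
  by (simp add: W1_def length_concat sum_list_triv o_def)

lemma mat_vec_W1: "length x = d \<Longrightarrow> mat_vec (W1 d) x = concat (map (\<lambda>q. [x ! q, - (x ! q)]) [0..<d])"
proof -
  assume x: "length x = d"
  have "sum_list (map2 (*) (map (\<lambda>j. if j = q then c else 0) [0..<d]) x) = c * x ! q"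
    if "q < d" for q c
  proof -
    have "(\<Sum>k<d. (if k = q then c else 0) * x ! k) = (\<Sum>k<d. if k = q then c * x ! k else 0)"
      by (rule sum.cong) auto
    then show ?thesis using x that by (simp add: sum_list_map2_times_upt)
  qed
  moreover have "W1 d = concat (map (\<lambda>q. [map (\<lambda>j. if j = q then 1 else 0) [0..<d],
      map (\<lambda>j. if j = q then -1 else 0) [0..<d]]) [0..<d])"
    by (auto simp: W1_def unitv_def intro!: arg_cong[where f = concat] map_cong)
  ultimately show ?thesis
    by (auto simp: mat_vec_def map_concat intro!: arg_cong[where f = concat] map_cong)
qed

lemma mat_vec_W2:
  assumes "length v = 2 * d"
  shows "mat_vec (W2 d L) v = [- L * sum_list v]"
proof -
  have "sum_list (map (\<lambda>x. - (L * x)) v) = - (L * sum_list v)"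
    by (induction v) (simp_all add: algebra_simps)
  with assms show ?thesis
    by (simp add: W2_def mat_vec_def zip_replicate1 o_def)
qed

lemma cone_net_hidden_layer:
  assumes "length x = d"
  shows "map relu (vadd (mat_vec (W1 d) x) (Bz d z)) =
    concat (map (\<lambda>q. [relu (x ! q - z ! q), relu (z ! q - x ! q)]) [0..<d])"
proof -
  have "vadd (mat_vec (W1 d) x) (Bz d z) =
      concat (map2 vadd (map (\<lambda>q. [x ! q, - (x ! q)]) [0..<d]) (map (\<lambda>q. [- (z ! q), z ! q]) [0..<d]))"
    unfolding mat_vec_W1[OF assms] Bz_def by (rule vadd_concat) (simp add: list_all2_conv_all_nth)
  then show ?thesis
    by (simp add: map2_map_map map_concat vadd_def o_def)
qed

lemma sum_list_cone_net_hidden_layer: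
  "sum_list (concat (map (\<lambda>q. [relu (x ! q - z ! q), relu (z ! q - x ! q)]) [0..<d])) = dist1 d x z"
proof -
  have "sum_list (concat (map (\<lambda>q. [a q, b q]) qs)) = sum_list (map (\<lambda>q. a q + b q) qs)"
    for a b :: "nat \<Rightarrow> real" and qs
    by (induction qs) simp_all
  moreover have "relu (s - t) + relu (t - s) = \<bar>s - t\<bar>" for s t
    by (simp add: relu_def)
  ultimately show ?thesis
    by (simp add: dist1_def sum_set_upt_conv_sum_list_nat[symmetric] atLeast0LessThan)
qed

lemma realize_cone_net:
  assumes "length x = d"
  shows "realize (cone_net d L g zs) x = map (\<lambda>z. g z - L * dist1 d x z) zs"
proof -
  let ?h = "\<lambda>z. concat (map (\<lambda>q. [relu (x ! q - z ! q), relu (z ! q - x ! q)]) [0..<d])"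
  have "vadd (mat_vec (concat (replicate (length zs) (W1 d))) x) (concat (map (Bz d) zs))
      = concat (map2 vadd (map (\<lambda>_. mat_vec (W1 d) x) zs) (map (Bz d) zs))"
    unfolding mat_vec_concat map_replicate_const[symmetric] map_map o_def
    by (rule vadd_concat) (simp add: list_all2_conv_all_nth assms mat_vec_W1 length_concat Bz_def o_def)
  then have "map relu (vadd (mat_vec (concat (replicate (length zs) (W1 d))) x) (concat (map (Bz d) zs)))
      = concat (map ?h zs)"
    using assms by (simp add: map2_map_map map_concat cone_net_hidden_layer o_def)
  moreover have "mat_vec (blockdiag (replicate (length zs) (W2 d L))) (concat (map ?h zs))
      = map (\<lambda>z. - L * dist1 d x z) zs"
  proof -
    have "length (?h z) = 2 * d" for z
      by (simp add: length_concat sum_list_triv o_def)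
    moreover have "ncols (W2 d L) = 2 * d" "\<forall>r\<in>set (W2 d L). length r = 2 * d"
      by (simp_all add: W2_def ncols_def)
    ultimately show ?thesis
      by (subst mat_vec_blockdiag)
        (simp_all add: list_all2_conv_all_nth mat_vec_W2 sum_list_cone_net_hidden_layer
          zip_replicate1 o_def)
  qed
  ultimately show ?thesis
    by (simp add: cone_net_def vadd_def map2_map_map o_def)
qed

lemma blockdiag_replicate_W2:
  assumes "0 < d" "0 < n"
  shows "blockdiag (replicate n (W2 d L)) = mat_of n (n * (2 * d)) (\<lambda>i j. if i = j div (2 * d) then - L else 0)"
proof -
  obtain k where n: "n = Suc k" using assms(2) by (metis gr0_conv_Suc)
  have W2: "W2 d L = mat_of 1 (2 * d) (\<lambda>_ _. - L)"
    by (simp add: W2_def mat_of_def map_replicate_const)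
  show ?thesis
    unfolding n W2 by (subst blockdiag_replicate_mat_of) (use assms in \<open>auto intro!: mat_of_cong\<close>)
qed

lemma ncomp_max_net_cone_net:
  assumes "max_net n \<Phi>" "length zs = n" "2 \<le> n" "0 < d"
  obtains R where "ncomp \<Phi> (cone_net d L g zs) =
      (concat (replicate n (W1 d)), concat (map (Bz d) zs)) #
      (mat_of (2 * n - 1) (n * (2 * d)) (\<lambda>i j. - L * max_layer1 i (j div (2 * d))),
       map (\<lambda>i. \<Sum>k<n. max_layer1 i k * g (zs ! k)) [0..<2 * n - 1]) # R"
    and "map (\<lambda>(W, B). length B) R = map (\<lambda>j. 2 * (n - j) - 1) [1..<n]"
    and "\<forall>e\<in>set (vectorize R). \<bar>e\<bar> \<le> 1"
proof -
  obtain R where \<Phi>: "\<Phi> = (mat_of (2 * n - 1) n max_layer1, replicate (2 * n - 1) 0) # R"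
    and R: "map (\<lambda>(W, B). length B) R = map (\<lambda>j. 2 * (n - j) - 1) [1..<n]"
      "\<forall>e\<in>set (vectorize R). \<bar>e\<bar> \<le> 1"
    using assms(1) unfolding max_net_def by blast
  have "(\<Sum>l<n. max_layer1 i l * (if l = j div (2 * d) then - L else 0)) = - L * max_layer1 i (j div (2 * d))"
    if "j < n * (2 * d)" for i j
  proof -
    have "j div (2 * d) < n" using that by (simp add: less_mult_imp_div_less)
    then show ?thesis by (simp add: if_distrib[of "\<lambda>a. _ * a"] cong: if_cong)
  qed
  then have "ncomp \<Phi> (cone_net d L g zs) =
      (concat (replicate n (W1 d)), concat (map (Bz d) zs)) #
      (mat_of (2 * n - 1) (n * (2 * d)) (\<lambda>i j. - L * max_layer1 i (j div (2 * d))),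
       map (\<lambda>i. \<Sum>k<n. max_layer1 i k * g (zs ! k)) [0..<2 * n - 1]) # R"
    using assms(2-4) unfolding \<Phi> cone_net_def
    by (simp add: ncomp_def blockdiag_replicate_W2 mat_mult_mat_of mat_vec_mat_of vadd_map_upt
        cong: mat_of_cong)
  with R that show ?thesis by blast
qed

lemma ncols_concat_replicate_W1: "0 < d \<Longrightarrow> 0 < n \<Longrightarrow> ncols (concat (replicate n (W1 d))) = d"
  by (cases n; cases d) (simp_all add: ncols_def W1_def unitv_def upt_conv_Cons del: upt_Suc)

lemma net_dims_ncomp_max_net_cone_net:
  assumes "max_net n \<Phi>" "length zs = n" "2 \<le> n" "0 < d"
  shows "net_dims (ncomp \<Phi> (cone_net d L g zs)) = [d, 2 * d * n] @ map (\<lambda>j. 2 * (n - j) - 1) [0..<n]"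
proof -
  obtain R where \<Psi>: "ncomp \<Phi> (cone_net d L g zs) =
      (concat (replicate n (W1 d)), concat (map (Bz d) zs)) #
      (mat_of (2 * n - 1) (n * (2 * d)) (\<lambda>i j. - L * max_layer1 i (j div (2 * d))),
       map (\<lambda>i. \<Sum>k<n. max_layer1 i k * g (zs ! k)) [0..<2 * n - 1]) # R"
    and R: "map (\<lambda>(W, B). length B) R = map (\<lambda>j. 2 * (n - j) - 1) [1..<n]"
    by (rule ncomp_max_net_cone_net[OF assms])
  have "length (concat (map (Bz d) zs)) = 2 * d * n"
    using assms(2) by (simp add: length_concat sum_list_triv o_def)
  then show ?thesis
    unfolding \<Psi> net_dims_def using R assms
    by (simp add: upt_conv_Cons ncols_concat_replicate_W1 del: upt_Suc)
qed

lemma realize_ncomp_max_net_cone_net: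
  assumes "max_net n \<Phi>" "length zs = n" "2 \<le> n" "0 < d" "length x = d"
  shows "realize (ncomp \<Phi> (cone_net d L g zs)) x = [Max ((\<lambda>z. g z - L * dist1 d x z) ` set zs)]"
proof -
  obtain R where \<Phi>: "\<Phi> = (mat_of (2 * n - 1) n max_layer1, replicate (2 * n - 1) 0) # R"
    and max: "\<And>y. length y = n \<Longrightarrow> realize \<Phi> y = [Max (set y)]"
    using assms(1) unfolding max_net_def by blast
  have cone_net: "cone_net d L g zs = [(concat (replicate n (W1 d)), concat (map (Bz d) zs)),
      (mat_of n (n * (2 * d)) (\<lambda>i j. if i = j div (2 * d) then - L else 0), map g zs)]"
    using assms(2-4) by (simp add: cone_net_def blockdiag_replicate_W2)
  have "realize (ncomp \<Phi> (cone_net d L g zs)) x = realize \<Phi> (realize (cone_net d L g zs) x)"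
    using assms(2-4) unfolding \<Phi> cone_net
    by (intro realize_ncomp_two_layers) (simp_all add: vadd_def mat_vec_def length_concat sum_list_triv o_def
        sum_list_replicate)
  also have "\<dots> = [Max ((\<lambda>z. g z - L * dist1 d x z) ` set zs)]"
    using assms(2,5) by (simp add: realize_cone_net max)
  finally show ?thesis .
qed

lemma maxnorm_le_iff: "0 \<le> B \<Longrightarrow> maxnorm v \<le> B \<longleftrightarrow> (\<forall>e\<in>set v. \<bar>e\<bar> \<le> B)"
  by (simp add: maxnorm_def)

lemma abs_nth_le_maxnorm: "q < length z \<Longrightarrow> \<bar>z ! q\<bar> \<le> maxnorm z"
  unfolding maxnorm_def by (intro Max_ge) auto

lemma abs_entry_W1_le_1: "r \<in> set (W1 d) \<Longrightarrow> e \<in> set r \<Longrightarrow> \<bar>e\<bar> \<le> 1"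
  by (auto simp: W1_def unitv_def split: if_splits)

lemma entry_Bz: "e \<in> set (Bz d z) \<Longrightarrow> \<exists>q<d. \<bar>e\<bar> = \<bar>z ! q\<bar>"
  by (auto simp: Bz_def)

lemma abs_sum_max_layer1_le:
  assumes "2 \<le> n" "i < 2 * n - 1" "0 \<le> B" "\<And>k. k < n \<Longrightarrow> 2 * \<bar>c k\<bar> \<le> B"
  shows "\<bar>\<Sum>k<n. max_layer1 i k * c k\<bar> \<le> B"
proof (cases "i = 0")
  case True
  have "\<bar>c 0 - c 1\<bar> \<le> \<bar>c 0\<bar> + \<bar>c 1\<bar>"
    by (rule abs_triangle_ineq4)
  then show ?thesis
    unfolding sum_max_layer1[OF assms(1,2)] using True assms(1) assms(4)[of 0] assms(4)[of 1] by simp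
next
  case False
  define q where "q = (i + 1) div 2"
  have "q < n" using assms(2) unfolding q_def by linarith
  then show ?thesis
    unfolding sum_max_layer1[OF assms(1,2)] q_def[symmetric]
    using False assms(3) assms(4)[of q] by simp
qed

lemma maxnorm_vectorize_ncomp_max_net_cone_net:
  assumes "max_net n \<Phi>" "length zs = n" "2 \<le> n" "0 < d"
    and "1 \<le> B" "\<bar>L\<bar> \<le> B" "\<And>z q. z \<in> set zs \<Longrightarrow> q < d \<Longrightarrow> \<bar>z ! q\<bar> \<le> B"
    and "\<And>z. z \<in> set zs \<Longrightarrow> 2 * \<bar>g z\<bar> \<le> B"
  shows "maxnorm (vectorize (ncomp \<Phi> (cone_net d L g zs))) \<le> B"
proof -
  obtain R where \<Psi>: "ncomp \<Phi> (cone_net d L g zs) =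
      (concat (replicate n (W1 d)), concat (map (Bz d) zs)) #
      (mat_of (2 * n - 1) (n * (2 * d)) (\<lambda>i j. - L * max_layer1 i (j div (2 * d))),
       map (\<lambda>i. \<Sum>k<n. max_layer1 i k * g (zs ! k)) [0..<2 * n - 1]) # R"
    and R: "\<forall>e\<in>set (vectorize R). \<bar>e\<bar> \<le> 1"
    by (rule ncomp_max_net_cone_net[OF assms(1-4)])
  have max_layer1_bound: "\<bar>max_layer1 i j\<bar> \<le> 1" for i j
    by (simp add: max_layer1_def)
  have bias_bound: "\<bar>\<Sum>k<n. max_layer1 i k * g (zs ! k)\<bar> \<le> B" if "i < 2 * n - 1" for i
    using assms(2,3,5,8) that by (intro abs_sum_max_layer1_le) auto
  have "\<bar>- L * max_layer1 i j\<bar> \<le> B" for i j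
    using mult_mono[OF assms(6) max_layer1_bound] assms(5) by (simp add: abs_mult)
  then have "\<bar>e\<bar> \<le> B" if "e \<in> set (vectorize (ncomp \<Phi> (cone_net d L g zs)))" for e
  proof -
    from that consider
        "e \<in> set (concat (concat (replicate n (W1 d))))" | "e \<in> set (concat (map (Bz d) zs))"
      | "e \<in> set (concat (mat_of (2 * n - 1) (n * (2 * d)) (\<lambda>i j. - L * max_layer1 i (j div (2 * d)))))"
      | "e \<in> set (map (\<lambda>i. \<Sum>k<n. max_layer1 i k * g (zs ! k)) [0..<2 * n - 1])"
      | "e \<in> set (vectorize R)"
      unfolding \<Psi> vectorize_def by (simp only: list.map prod.case concat.simps set_append) blast
    then show ?thesis
    proof cases
      case 1
      then show ?thesis using assms(5) by (auto dest: abs_entry_W1_le_1)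
    next
      case 2
      then show ?thesis using assms(7) by (fastforce dest: entry_Bz)
    qed (use assms(5) R bias_bound \<open>\<And>i j. \<bar>- L * max_layer1 i j\<bar> \<le> B\<close> in
        \<open>auto dest!: entry_mat_of\<close>)
  qed
  then show ?thesis
    using assms(5) by (simp add: maxnorm_le_iff)
qed

lemma maxnorm_vectorize_ncomp_max_net_cone_net_le_Max:
  assumes "max_net n \<Phi>" "length zs = n" "2 \<le> n" "0 < d" "0 \<le> L" "\<forall>z\<in>set zs. length z = d"
  shows "maxnorm (vectorize (ncomp \<Phi> (cone_net d L g zs)))
    \<le> Max {1, L, Max (maxnorm ` set zs), 2 * Max ((\<lambda>z. \<bar>g z\<bar>) ` set zs)}"
proof (rule maxnorm_vectorize_ncomp_max_net_cone_net[OF assms(1-4)])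
  fix z q assume z: "z \<in> set zs" and "q < d"
  then have "\<bar>z ! q\<bar> \<le> maxnorm z"
    using assms(6) by (intro abs_nth_le_maxnorm) auto
  also have "\<dots> \<le> Max (maxnorm ` set zs)"
    using z by simp
  finally show "\<bar>z ! q\<bar> \<le> Max {1, L, Max (maxnorm ` set zs), 2 * Max ((\<lambda>z. \<bar>g z\<bar>) ` set zs)}"
    by simp
next
  fix z assume "z \<in> set zs"
  then have "\<bar>g z\<bar> \<le> Max ((\<lambda>z. \<bar>g z\<bar>) ` set zs)"
    by simp
  then show "2 * \<bar>g z\<bar> \<le> Max {1, L, Max (maxnorm ` set zs), 2 * Max ((\<lambda>z. \<bar>g z\<bar>) ` set zs)}"
    by simp
qed (use assms(5) in simp_all)

lemma abs_diff_Max_cones_le: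
  fixes f :: "'a \<Rightarrow> real"
  assumes lip: "\<forall>x\<in>D. \<forall>y\<in>D. \<bar>f x - f y\<bar> \<le> L * \<delta> x y"
    and "M \<subseteq> D" "finite M" "x \<in> D" "z \<in> M"
  shows "\<bar>f x - Max ((\<lambda>y. f y - L * \<delta> x y) ` M)\<bar> \<le> 2 * L * \<delta> x z"
proof -
  let ?cone = "\<lambda>y. f y - L * \<delta> x y"
  have "?cone y \<le> f x" if "y \<in> M" for y
    using lip assms(2,4) that by (smt (verit) subsetD)
  then have "Max (?cone ` M) \<le> f x"
    using assms(3,5) by (subst Max_le_iff) auto
  moreover have "?cone z \<le> Max (?cone ` M)"
    using assms(3,5) by auto
  moreover have "f x - f z \<le> L * \<delta> x z"
    using lip assms(2,4,5) by (smt (verit) subsetD)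
  ultimately show ?thesis by linarith
qed

lemma SUP_abs_diff_Max_cones_le:
  fixes f :: "'a \<Rightarrow> real"
  assumes lip: "\<forall>x\<in>D. \<forall>y\<in>D. \<bar>f x - f y\<bar> \<le> L * \<delta> x y"
    and "0 \<le> L" "M \<subseteq> D" "finite M" "M \<noteq> {}"
  shows "(SUP x\<in>D. ereal \<bar>f x - Max ((\<lambda>y. f y - L * \<delta> x y) ` M)\<bar>)
    \<le> ereal (2 * L) * (SUP x\<in>D. INF y\<in>M. ereal (\<delta> x y))"
proof (rule SUP_least)
  fix x assume x: "x \<in> D"
  have "Min (\<delta> x ` M) \<in> \<delta> x ` M"
    using assms(4,5) by (intro Min_in) auto
  then obtain z where z: "z \<in> M" "\<delta> x z = Min (\<delta> x ` M)"
    by auto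
  have "(INF y\<in>M. ereal (\<delta> x y)) = ereal (\<delta> x z)"
    using z assms(4) by (intro antisym INF_lower INF_greatest) auto
  then have "ereal \<bar>f x - Max ((\<lambda>y. f y - L * \<delta> x y) ` M)\<bar>
      \<le> ereal (2 * L) * (INF y\<in>M. ereal (\<delta> x y))"
    using abs_diff_Max_cones_le[OF lip assms(3,4) x z(1)] by simp
  also have "\<dots> \<le> ereal (2 * L) * (SUP x\<in>D. INF y\<in>M. ereal (\<delta> x y))"
    using x assms(2) by (intro ereal_mult_left_mono SUP_upper) auto
  finally show "ereal \<bar>f x - Max ((\<lambda>y. f y - L * \<delta> x y) ` M)\<bar>
      \<le> ereal (2 * L) * (SUP x\<in>D. INF y\<in>M. ereal (\<delta> x y))" .
qed

lemma dist1_pos: "length x = d \<Longrightarrow> length y = d \<Longrightarrow> x \<noteq> y \<Longrightarrow> 0 < dist1 d x y"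
proof -
  assume "length x = d" "length y = d" "x \<noteq> y"
  then obtain i where i: "i < d" "x ! i \<noteq> y ! i"
    using nth_equalityI by metis
  then have "0 < \<bar>x ! i - y ! i\<bar>" by simp
  also have "\<dots> \<le> dist1 d x y"
    unfolding dist1_def using i by (intro member_le_sum) auto
  finally show ?thesis .
qed

lemma lipschitz_dist1_const_nonneg:
  assumes lip: "\<forall>x\<in>D. \<forall>y\<in>D. \<bar>f x - f y\<bar> \<le> L * dist1 d x y"
    and "\<forall>x\<in>D. length x = d" "finite D" "2 \<le> card D"
  shows "0 \<le> L"
proof -
  obtain x y where "x \<in> D" "y \<in> D" "x \<noteq> y"
    using assms(3,4) card_le_Suc0_iff_eq[of D] by fastforce
  then have "0 < dist1 d x y" and "0 \<le> L * dist1 d x y"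
    using assms(2) lip by (auto intro: dist1_pos order_trans[OF abs_ge_zero])
  then show ?thesis by (simp add: zero_le_mult_iff)
qed

theorem proposition3p5:
  fixes phi :: "nat \<Rightarrow> net" and d :: nat and L :: real and D :: "vec set"
    and f :: "vec \<Rightarrow> real" and M :: "vec set" and m :: "nat \<Rightarrow> vec"
  assumes phi_net: "\<forall>k\<ge>2. valid_net (phi k)"
    and phi_in: "\<forall>k\<ge>2. net_in (phi k) = net_out (par [phi 2, idnet (k-1)])"
    and phi_step: "\<forall>k\<ge>2. phi (Suc k) = ncomp (phi k) (par [phi 2, idnet (k-1)])"
    and phi_2: "phi 2 = phi2"
    and d_pos: "d \<ge> 1"
    and D_dim: "\<forall>x\<in>D. length x = d"
    and lip: "\<forall>x\<in>D. \<forall>y\<in>D. \<bar>f x - f y\<bar> \<le> L * dist1 d x y"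
    and M_sub: "M \<subseteq> D" and M_fin: "finite M" and M_card: "card M \<ge> 2"
    and m_bij: "bij_betw m {1..card M} M"
  defines "\<Phi> \<equiv> ncomp (phi (card M))
       [(concat (replicate (card M) (W1 d)), concat (map (\<lambda>j. Bz d (m j)) [1..<card M + 1])),
        (blockdiag (replicate (card M) (W2 d L)), map (\<lambda>j. f (m j)) [1..<card M + 1])]"
  shows "net_dims \<Phi> = [d, 2*d*card M] @ map (\<lambda>j. 2*(card M - j) - 1) [0..<card M] \<and>
         maxnorm (vectorize \<Phi>) \<le> Max {1, L, Max (maxnorm ` M), 2 * Max ((\<lambda>z. \<bar>f z\<bar>) ` M)} \<and>
         (SUP x\<in>D. ereal \<bar>f x - hd (realize \<Phi> x)\<bar>)
           \<le> ereal (2*L) * (SUP x\<in>D. INF y\<in>M. ereal (dist1 d x y))"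
proof -
  define n where "n = card M"
  define zs where "zs = map m [1..<n + 1]"
  have n: "2 \<le> n" and d: "0 < d"
    using M_card d_pos unfolding n_def by simp_all
  have "set [1..<n + 1] = {1..n}" by auto
  then have zs: "length zs = n" "set zs = M"
    using m_bij unfolding zs_def n_def bij_betw_def by (simp_all del: upt_Suc)
  have \<Phi>: "\<Phi> = ncomp (phi n) (cone_net d L f zs)"
    unfolding \<Phi>_def cone_net_def zs(1) unfolding zs_def n_def by (simp add: o_def del: upt_Suc)
  have max_net: "max_net n (phi n)"
    using phi_step phi_2 n by (rule max_net_phi)
  have "\<forall>x\<in>M. \<forall>y\<in>M. \<bar>f x - f y\<bar> \<le> L * dist1 d x y" "\<forall>x\<in>M. length x = d"
    using lip D_dim M_sub by blast+
  then have L: "0 \<le> L"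
    using M_fin M_card by (rule lipschitz_dist1_const_nonneg)
  have "hd (realize \<Phi> x) = Max ((\<lambda>z. f z - L * dist1 d x z) ` M)" if "x \<in> D" for x
    using that D_dim unfolding \<Phi> by (simp add: realize_ncomp_max_net_cone_net[OF max_net zs(1) n d] zs(2))
  then have "(SUP x\<in>D. ereal \<bar>f x - hd (realize \<Phi> x)\<bar>)
      \<le> ereal (2 * L) * (SUP x\<in>D. INF y\<in>M. ereal (dist1 d x y))"
    using SUP_abs_diff_Max_cones_le[OF lip L M_sub M_fin] zs n by (force cong: SUP_cong)
  moreover have "maxnorm (vectorize \<Phi>) \<le> Max {1, L, Max (maxnorm ` M), 2 * Max ((\<lambda>z. \<bar>f z\<bar>) ` M)}"
    unfolding \<Phi> zs(2)[symmetric] using L zs D_dim M_sub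
    by (intro maxnorm_vectorize_ncomp_max_net_cone_net_le_Max[OF max_net zs(1) n d]) auto
  ultimately show ?thesis
    unfolding \<Phi> using net_dims_ncomp_max_net_cone_net[OF max_net zs(1) n d] by (simp add: n_def)
qed

end
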